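(* Let $X\in C^\infty(\mathbb T;\mathbb R)$ have at least one zero and no degenerate zero, and let $K^\pm$ be as below. For every sufficiently small $\sigma>0$ there exists a smooth function $\eta_\sigma:\mathbb T\to\mathbb R$ with $\eta_\sigma\equiv1$ on $K^+$, $\eta_\sigma\equiv0$ on $K^-$, and $$\Big|\frac{d}{dt}\Big|_{t=0}\eta_\sigma(X^t(x,\xi))\Big|=|X(x)\eta_\sigma'(x)|<\sigma\qquad\forall (x,\xi)\in\mathbb T\times\mathbb R,$$ where $X^t(x,\xi)$ is the $x$-component of the flow of $\mathcal X_h(x,\xi)=(X(x),-\xi X'(x))$.
   Context: $\mathbb T:=\mathbb R/2\pi\mathbb Z$; $K^+:=\{x:X(x)=0,X'(x)<0\}$, $K^-:=\{x:X(x)=0,X'(x)>0\}$. *)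

theory Defs
  imports "HOL-Analysis.Analysis"
begin

text \<open>Functions on the torus T = R/2piZ are represented as 2pi-periodic functions on R.\<close>
definition periodic_2pi :: "(real \<Rightarrow> real) \<Rightarrow> bool" where
  "periodic_2pi f \<longleftrightarrow> (\<forall>x. f (x + 2 * pi) = f x)"

definition smooth_real :: "(real \<Rightarrow> real) \<Rightarrow> bool" where
  "smooth_real f \<longleftrightarrow> (\<forall>n x. ((deriv ^^ n) f) differentiable (at x))"

definition Kplus :: "(real \<Rightarrow> real) \<Rightarrow> real set" where
  "Kplus X = {x. X x = 0 \<and> deriv X x < 0}"

definition Kminus :: "(real \<Rightarrow> real) \<Rightarrow> real set" where
  "Kminus X = {x. X x = 0 \<and> deriv X x > 0}"

end

theory Submission
  imports Defs "HOL-Library.Periodic_Fun"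
begin

text \<open>
  Let theta = X' / sqrt (X'^2 + X^2), which is smooth because no zero of X is degenerate and
  equals sgn X' on the zero set of X, and let M = (1 + ln (1 + D X^2)) powr (-p).
  Then eta = (1 - theta M) / 2 is 1 on K+ and 0 on K-, and
  X eta' = - (X theta' M + theta X' (X M')) / 2.
  Since X theta' = X^2 (X X'' - X'^2) / (X'^2 + X^2) powr (3/2), the first term is bounded
  by a constant times X^2 M.  The second term is at most p |X'| whatever D is: M depends on X
  only through a logarithm, so that |b (d/db) M(b)| <= 2 p.  Hence one first chooses p small
  and then D so large that X^2 M is uniformly small.
\<close>

section \<open>Higher derivatives\<close>

fun higher_differentiable_on :: "nat \<Rightarrow> real set \<Rightarrow> (real \<Rightarrow> real) \<Rightarrow> bool" where
  "higher_differentiable_on 0 U f \<longleftrightarrow> (\<forall>x\<in>U. f differentiable at x)"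
| "higher_differentiable_on (Suc n) U f \<longleftrightarrow>
     (\<forall>x\<in>U. f differentiable at x) \<and> higher_differentiable_on n U (deriv f)"

lemma higher_differentiable_on_iff:
  "higher_differentiable_on n U f \<longleftrightarrow> (\<forall>k\<le>n. \<forall>x\<in>U. (deriv ^^ k) f differentiable at x)"
proof (induction n arbitrary: f)
  case 0
  show ?case
    by simp
next
  case (Suc n)
  have "(\<forall>k\<le>Suc n. P k) \<longleftrightarrow> P 0 \<and> (\<forall>k\<le>n. P (Suc k))" for P
    using All_less_Suc2[of "Suc n" P] by (simp only: less_Suc_eq_le)
  then show ?case
    using Suc.IH by (simp add: funpow_Suc_right del: funpow.simps)
qed

lemma smooth_real_iff_higher_differentiable_on:
  "smooth_real f \<longleftrightarrow> (\<forall>n. higher_differentiable_on n UNIV f)"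
  unfolding smooth_real_def higher_differentiable_on_iff by blast

lemma higher_differentiable_on_imp_differentiable:
  "higher_differentiable_on n U f \<Longrightarrow> x \<in> U \<Longrightarrow> f differentiable at x"
  by (cases n) auto

lemma higher_differentiable_on_imp_has_deriv:
  "higher_differentiable_on n U f \<Longrightarrow> x \<in> U \<Longrightarrow> (f has_real_derivative deriv f x) (at x)"
  using higher_differentiable_on_imp_differentiable DERIV_deriv_iff_real_differentiable by blast

lemma higher_differentiable_on_Suc_imp:
  "higher_differentiable_on (Suc n) U f \<Longrightarrow> higher_differentiable_on n U f"
  by (induction n arbitrary: f) auto

lemma higher_differentiable_on_cong:
  assumes "open U" and eq: "\<And>x. x \<in> U \<Longrightarrow> f x = g x" and "higher_differentiable_on n U g"
  shows "higher_differentiable_on n U f"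
  using eq assms(3)
proof (induction n arbitrary: f g)
  case 0
  then show ?case
    using has_field_derivative_transform_within_open[OF _ \<open>open U\<close>]
    by (metis higher_differentiable_on.simps(1) real_differentiable_def)
next
  case (Suc n)
  have hd: "(f has_real_derivative deriv g x) (at x)" if "x \<in> U" for x
    using has_field_derivative_transform_within_open[OF _ \<open>open U\<close> that] Suc.prems that
      higher_differentiable_on_imp_has_deriv by metis
  then have "higher_differentiable_on n U (deriv f)"
    using Suc.IH[of "deriv f" "deriv g"] Suc.prems(2) DERIV_imp_deriv by auto
  then show ?case
    using hd real_differentiable_def by auto
qed

lemma higher_differentiable_on_const: "higher_differentiable_on n U (\<lambda>x. c)"
  by (induction n arbitrary: c) (auto simp: deriv_const)

lemma higher_differentiable_on_add:
  assumes "open U" "higher_differentiable_on n U f" "higher_differentiable_on n U g"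
  shows "higher_differentiable_on n U (\<lambda>x. f x + g x)"
  using assms(2,3)
proof (induction n arbitrary: f g)
  case 0
  then show ?case by auto
next
  case (Suc n)
  have "deriv (\<lambda>x. f x + g x) x = deriv f x + deriv g x" if "x \<in> U" for x
    using Suc.prems that
    by (intro DERIV_imp_deriv derivative_intros) (auto simp: DERIV_deriv_iff_real_differentiable)
  moreover have "higher_differentiable_on n U (\<lambda>x. deriv f x + deriv g x)"
    using Suc.prems by (intro Suc.IH) auto
  ultimately have "higher_differentiable_on n U (deriv (\<lambda>x. f x + g x))"
    by (rule higher_differentiable_on_cong[OF \<open>open U\<close>])
  then show ?case
    using Suc.prems by auto
qed

lemma higher_differentiable_on_mult:
  assumes "open U" "higher_differentiable_on n U f" "higher_differentiable_on n U g"
  shows "higher_differentiable_on n U (\<lambda>x. f x * g x)"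
  using assms(2,3)
proof (induction n arbitrary: f g)
  case 0
  then show ?case by auto
next
  case (Suc n)
  have "deriv (\<lambda>x. f x * g x) x = deriv f x * g x + f x * deriv g x" if "x \<in> U" for x
  proof -
    have "(f has_real_derivative deriv f x) (at x)" "(g has_real_derivative deriv g x) (at x)"
      using Suc.prems that by (auto simp: DERIV_deriv_iff_real_differentiable)
    from DERIV_mult[OF this] show ?thesis
      by (simp add: DERIV_imp_deriv mult.commute)
  qed
  moreover have "higher_differentiable_on n U (\<lambda>x. deriv f x * g x + f x * deriv g x)"
  proof (rule higher_differentiable_on_add[OF \<open>open U\<close>])
    have "higher_differentiable_on n U f" "higher_differentiable_on n U g"
      using Suc.prems higher_differentiable_on_Suc_imp by blast+
    then show "higher_differentiable_on n U (\<lambda>x. deriv f x * g x)"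
      "higher_differentiable_on n U (\<lambda>x. f x * deriv g x)"
      using Suc.prems by (auto intro: Suc.IH)
  qed
  ultimately have "higher_differentiable_on n U (deriv (\<lambda>x. f x * g x))"
    by (rule higher_differentiable_on_cong[OF \<open>open U\<close>])
  then show ?case
    using Suc.prems by auto
qed

lemma higher_differentiable_on_compose:
  assumes "open U" "higher_differentiable_on n V h" "higher_differentiable_on n U f" "f ` U \<subseteq> V"
  shows "higher_differentiable_on n U (\<lambda>x. h (f x))"
  using assms(2-4)
proof (induction n arbitrary: h f)
  case 0
  then show ?case
    using differentiable_chain_at[of f _ h] by (auto simp: o_def)
next
  case (Suc n)
  have chain: "((\<lambda>x. h (f x)) has_real_derivative deriv h (f x) * deriv f x) (at x)" if "x \<in> U" for x
  proof -
    have "(h has_real_derivative deriv h (f x)) (at (f x))" "(f has_real_derivative deriv f x) (at x)"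
      using Suc.prems that by (auto simp: DERIV_deriv_iff_real_differentiable)
    then show ?thesis
      by (rule DERIV_chain2)
  qed
  have dh: "higher_differentiable_on n V (deriv h)" and df: "higher_differentiable_on n U (deriv f)"
    using Suc.prems by simp_all
  have "higher_differentiable_on n U f"
    using Suc.prems(2) by (rule higher_differentiable_on_Suc_imp)
  with dh df Suc.prems(3) have "higher_differentiable_on n U (\<lambda>x. deriv h (f x) * deriv f x)"
    by (intro higher_differentiable_on_mult[OF \<open>open U\<close> Suc.IH])
  with DERIV_imp_deriv[OF chain] have "higher_differentiable_on n U (deriv (\<lambda>x. h (f x)))"
    by (rule higher_differentiable_on_cong[OF \<open>open U\<close>])
  then show ?case
    using chain real_differentiable_def by auto
qed

lemma higher_differentiable_on_powr: "higher_differentiable_on n {0<..} (\<lambda>u. u powr a)"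
proof (induction n arbitrary: a)
  case 0
  show ?case
    by (auto intro!: derivative_eq_intros simp: real_differentiable_def)
next
  case (Suc n)
  have hd: "((\<lambda>u. u powr a) has_real_derivative a * u powr (a - 1)) (at u)" if "u > 0" for u
    using that by (auto intro!: derivative_eq_intros)
  have "higher_differentiable_on n {0<..} (\<lambda>u. a * u powr (a - 1))"
    by (intro higher_differentiable_on_mult higher_differentiable_on_const Suc.IH open_greaterThan)
  with DERIV_imp_deriv[OF hd] have "higher_differentiable_on n {0<..} (deriv (\<lambda>u. u powr a))"
    by (rule higher_differentiable_on_cong[OF open_greaterThan]) simp
  then show ?case
    using hd real_differentiable_def by auto
qed

lemma higher_differentiable_on_ln: "higher_differentiable_on n {0<..} ln"
proof -
  have hd: "(ln has_real_derivative u powr (-1)) (at u)" if "u > 0" for u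
    using that by (auto intro!: derivative_eq_intros simp: powr_neg_one)
  have "higher_differentiable_on n {0<..} (deriv ln)"
    by (rule higher_differentiable_on_cong[OF open_greaterThan _ higher_differentiable_on_powr[of n "-1"]])
      (simp add: DERIV_imp_deriv[OF hd])
  then have "higher_differentiable_on (Suc n) {0<..} ln"
    using hd real_differentiable_def by auto
  then show ?thesis
    by (rule higher_differentiable_on_Suc_imp)
qed

lemma higher_differentiable_on_ident: "higher_differentiable_on n U (\<lambda>x. x)"
proof (induction n)
  case 0
  then show ?case by simp
next
  case (Suc n)
  have "deriv (\<lambda>x. x) = (\<lambda>x. 1 :: real)"
    by (simp add: fun_eq_iff DERIV_imp_deriv)
  then show ?case
    by (simp add: higher_differentiable_on_const)
qed

lemma smooth_real_const: "smooth_real (\<lambda>x. c)"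
  by (simp add: smooth_real_iff_higher_differentiable_on higher_differentiable_on_const)

lemma smooth_real_add: "smooth_real f \<Longrightarrow> smooth_real g \<Longrightarrow> smooth_real (\<lambda>x. f x + g x)"
  by (simp add: smooth_real_iff_higher_differentiable_on higher_differentiable_on_add)

lemma smooth_real_mult: "smooth_real f \<Longrightarrow> smooth_real g \<Longrightarrow> smooth_real (\<lambda>x. f x * g x)"
  by (simp add: smooth_real_iff_higher_differentiable_on higher_differentiable_on_mult)

lemma smooth_real_compose: "smooth_real h \<Longrightarrow> smooth_real f \<Longrightarrow> smooth_real (\<lambda>x. h (f x))"
  unfolding smooth_real_iff_higher_differentiable_on
  by (blast intro: higher_differentiable_on_compose)

lemma smooth_real_powr: "smooth_real f \<Longrightarrow> (\<And>x. f x > 0) \<Longrightarrow> smooth_real (\<lambda>x. f x powr a)"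
  unfolding smooth_real_iff_higher_differentiable_on
  by (blast intro: higher_differentiable_on_compose[OF _ higher_differentiable_on_powr])

lemma smooth_real_ln: "smooth_real f \<Longrightarrow> (\<And>x. f x > 0) \<Longrightarrow> smooth_real (\<lambda>x. ln (f x))"
  unfolding smooth_real_iff_higher_differentiable_on
  by (blast intro: higher_differentiable_on_compose[OF _ higher_differentiable_on_ln])

lemma smooth_real_deriv: "smooth_real f \<Longrightarrow> smooth_real (deriv f)"
  by (meson smooth_real_iff_higher_differentiable_on higher_differentiable_on.simps(2))

lemma smooth_real_has_deriv: "smooth_real f \<Longrightarrow> (f has_real_derivative deriv f x) (at x)"
  by (meson smooth_real_iff_higher_differentiable_on higher_differentiable_on_imp_has_deriv UNIV_I)

lemma smooth_real_diff:
  assumes "smooth_real f" "smooth_real g"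
  shows "smooth_real (\<lambda>x. f x - g x)"
proof -
  have "smooth_real (\<lambda>x. f x + (-1) * g x)"
    using assms by (intro smooth_real_add smooth_real_mult smooth_real_const)
  then show ?thesis
    by simp
qed

lemma smooth_real_ident: "smooth_real (\<lambda>x. x)"
  by (simp add: smooth_real_iff_higher_differentiable_on higher_differentiable_on_ident)

lemma smooth_real_power: "smooth_real f \<Longrightarrow> smooth_real (\<lambda>x. f x ^ k)"
  by (induction k) (simp_all add: smooth_real_const smooth_real_mult)

lemma smooth_real_divide:
  assumes "smooth_real f" "smooth_real g" "\<And>x. g x > 0"
  shows "smooth_real (\<lambda>x. f x / g x)"
proof -
  have "smooth_real (\<lambda>x. f x * g x powr (-1))"
    using assms by (intro smooth_real_mult smooth_real_powr)
  moreover have "(\<lambda>x. f x * g x powr (-1)) = (\<lambda>x. f x / g x)"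
    using powr_neg_one[OF assms(3)] by (simp add: fun_eq_iff)
  ultimately show ?thesis
    by (simp only:)
qed

lemma smooth_real_sqrt:
  assumes "smooth_real f" "\<And>x. f x > 0"
  shows "smooth_real (\<lambda>x. sqrt (f x))"
proof -
  have "smooth_real (\<lambda>x. f x powr (1/2))"
    using assms by (intro smooth_real_powr)
  moreover have "(\<lambda>x. f x powr (1/2)) = (\<lambda>x. sqrt (f x))"
    by (intro ext powr_half_sqrt less_imp_le assms(2))
  ultimately show ?thesis
    by (simp only:)
qed

section \<open>Periodic functions\<close>

lemma periodic_2pi_iff_periodic_fun_simple: "periodic_2pi f \<longleftrightarrow> periodic_fun_simple f (2 * pi)"
  by (simp add: periodic_2pi_def periodic_fun_simple_def)

lemma periodic_2pi_range:
  assumes "periodic_2pi f"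
  shows "range f = f ` {0..2 * pi}"
proof -
  interpret periodic_fun_simple f "2 * pi"
    using assms by (simp add: periodic_2pi_iff_periodic_fun_simple)
  have "f x \<in> f ` {0..2 * pi}" for x
  proof
    define k where "k = \<lfloor>x / (2 * pi)\<rfloor>"
    show "f x = f (x - of_int k * (2 * pi))"
      by (simp add: minus_of_int)
    show "x - of_int k * (2 * pi) \<in> {0..2 * pi}"
      using floor_divide_lower[of "2 * pi" x] floor_divide_upper[of "2 * pi" x]
      by (simp add: k_def algebra_simps)
  qed
  then show ?thesis
    by auto
qed

lemma periodic_2pi_compact_range:
  "periodic_2pi f \<Longrightarrow> continuous_on {0..2 * pi} f \<Longrightarrow> compact (range f)"
  by (simp add: periodic_2pi_range compact_continuous_image)

lemma periodic_2pi_bounded: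
  assumes "periodic_2pi f" "continuous_on {0..2 * pi} f"
  obtains B where "\<And>x. \<bar>f x\<bar> \<le> B"
  using compact_imp_bounded[OF periodic_2pi_compact_range[OF assms]]
  by (auto simp: bounded_real)

lemma periodic_2pi_pos_bounded_below:
  assumes "periodic_2pi f" "continuous_on {0..2 * pi} f" "\<And>x. f x > 0"
  obtains m where "m > 0" "\<And>x. m \<le> f x"
proof -
  obtain y where "y \<in> range f" "\<forall>z\<in>range f. y \<le> z"
    using compact_attains_inf[OF periodic_2pi_compact_range[OF assms(1,2)]] by blast
  then show ?thesis
    using that assms(3) by auto
qed

lemma periodic_2pi_deriv:
  assumes "periodic_2pi f"
  shows "periodic_2pi (deriv f)"
proof -
  have "f (x + 2 * pi + y) = f (x + y)" for x y
    using assms unfolding periodic_2pi_def by (metis add.commute add.left_commute)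
  then have "f \<circ> (\<lambda>y. x + 2 * pi + y) = f \<circ> (\<lambda>y. x + y)" for x
    by (simp add: o_def)
  then show ?thesis
    unfolding periodic_2pi_def by (metis deriv_shift_0)
qed

lemma smooth_real_continuous_on: "smooth_real f \<Longrightarrow> continuous_on S f"
  by (intro continuous_at_imp_continuous_on ballI differentiable_imp_continuous_within)
    (meson smooth_real_has_deriv real_differentiable_def)

section \<open>The logarithmic damping factor\<close>

definition damping :: "real \<Rightarrow> real \<Rightarrow> real \<Rightarrow> real" where
  "damping D p b = (1 + ln (1 + D * b\<^sup>2)) powr (-p)"

lemma damping_base_ge_1: "D \<ge> 0 \<Longrightarrow> 1 \<le> 1 + ln (1 + D * (b::real)\<^sup>2)"
  using ln_ge_zero[of "1 + D * b\<^sup>2"] by simp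

lemma damping_pos:
  assumes "D \<ge> 0"
  shows "0 < damping D p b"
  unfolding damping_def using damping_base_ge_1[OF assms, of b]
  by (intro powr_gt_zero[THEN iffD2]) linarith

lemma damping_le_1: "D \<ge> 0 \<Longrightarrow> p \<ge> 0 \<Longrightarrow> damping D p b \<le> 1"
  unfolding damping_def using powr_mono[of "-p" 0] damping_base_ge_1[of D b] by simp

lemma has_real_derivative_damping:
  assumes "D \<ge> 0"
  shows "(damping D p has_real_derivative
      -p * (1 + ln (1 + D * b\<^sup>2)) powr (-p - 1) * (2 * D * b / (1 + D * b\<^sup>2))) (at b)"
  unfolding damping_def using assms damping_base_ge_1[OF assms, of b]
  by (auto intro!: derivative_eq_intros simp: add_pos_nonneg)

lemma abs_mult_deriv_damping_le:
  assumes "D \<ge> 0" "p \<ge> 0"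
  shows "\<bar>b * deriv (damping D p) b\<bar> \<le> 2 * p"
proof -
  define Q where "Q = 1 + ln (1 + D * b\<^sup>2)"
  have "Q powr (-p - 1) \<le> 1"
    using powr_mono[of "-p - 1" 0 Q] damping_base_ge_1[OF assms(1), of b] assms(2) by (simp add: Q_def)
  moreover have "D * b\<^sup>2 / (1 + D * b\<^sup>2) \<le> 1"
    using assms(1) by (simp add: divide_le_eq_1 add_pos_nonneg)
  ultimately have "p * Q powr (-p - 1) * (D * b\<^sup>2 / (1 + D * b\<^sup>2)) \<le> p * 1 * 1"
    using assms by (intro mult_mono) simp_all
  moreover have "\<bar>b * deriv (damping D p) b\<bar> = 2 * (p * Q powr (-p - 1) * (D * b\<^sup>2 / (1 + D * b\<^sup>2)))"
    using assms DERIV_imp_deriv[OF has_real_derivative_damping[OF assms(1)]]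
    by (simp add: Q_def abs_mult power2_eq_square)
  ultimately show ?thesis
    by simp
qed

lemma smooth_real_damping: "D \<ge> 0 \<Longrightarrow> smooth_real (damping D p)"
  unfolding damping_def
  by (intro smooth_real_powr smooth_real_add smooth_real_ln smooth_real_mult smooth_real_power
      smooth_real_const smooth_real_ident) (auto simp: add_pos_nonneg)

lemma square_mult_damping_small:
  assumes "p > 0" "\<delta> > 0"
  obtains D where "D > 0" "\<And>b. \<bar>b\<bar> \<le> B \<Longrightarrow> b\<^sup>2 * damping D p b \<le> \<delta>"
proof
  define T where "T = B\<^sup>2 / \<delta> + 1"
  define D where "D = exp (T powr (1 / p)) / \<delta>"
  have "T > 0"
    using assms by (simp add: T_def add_nonneg_pos)
  show "D > 0"
    using assms by (simp add: D_def)
  fix b assume "\<bar>b\<bar> \<le> B"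
  show "b\<^sup>2 * damping D p b \<le> \<delta>"
  proof (cases "b\<^sup>2 \<le> \<delta>")
    case True
    then show ?thesis
      using damping_le_1[of D p b] damping_pos[of D p b] \<open>D > 0\<close> assms(1)
      by (smt (verit) mult_left_le zero_le_power2)
  next
    case False
    \<comment> \<open>D is chosen so that here the logarithm exceeds T powr (1/p), making the damping at most 1/T.\<close>
    have "exp (T powr (1 / p)) \<le> D * b\<^sup>2"
      using False assms by (simp add: D_def field_simps)
    then have "T powr (1 / p) \<le> 1 + ln (1 + D * b\<^sup>2)"
      using \<open>D > 0\<close> by (smt (verit) exp_le_cancel_iff exp_ln zero_le_power2 mult_nonneg_nonneg)
    then have "T \<le> (1 + ln (1 + D * b\<^sup>2)) powr p"
      using powr_mono2[of p "T powr (1 / p)"] \<open>T > 0\<close> assms(1) by (simp add: powr_powr)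
    then have "damping D p b \<le> 1 / T"
      using \<open>T > 0\<close> by (simp add: damping_def powr_minus_divide frac_le)
    moreover have "b\<^sup>2 \<le> B\<^sup>2"
      using \<open>\<bar>b\<bar> \<le> B\<close> by (metis abs_le_square_iff abs_of_nonneg abs_ge_zero order.trans)
    ultimately have "b\<^sup>2 * damping D p b \<le> B\<^sup>2 * (1 / T)"
      using \<open>T > 0\<close> damping_pos[of D p b] \<open>D > 0\<close> by (intro mult_mono) simp_all
    also have "\<dots> \<le> \<delta>"
      using assms \<open>T > 0\<close> by (simp add: T_def field_simps)
    finally show ?thesis .
  qed
qed

section \<open>The normalized derivative\<close>

definition normalized_deriv :: "(real \<Rightarrow> real) \<Rightarrow> real \<Rightarrow> real" where
  "normalized_deriv X x = deriv X x / sqrt ((deriv X x)\<^sup>2 + (X x)\<^sup>2)"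

lemma abs_normalized_deriv_le_1: "\<bar>normalized_deriv X x\<bar> \<le> 1"
proof (cases "sqrt ((deriv X x)\<^sup>2 + (X x)\<^sup>2) = 0")
  case True
  then show ?thesis
    by (simp add: normalized_deriv_def)
next
  case False
  then have "0 < sqrt ((deriv X x)\<^sup>2 + (X x)\<^sup>2)"
    by (simp add: order_neq_le_trans)
  moreover have "\<bar>deriv X x\<bar> \<le> sqrt ((deriv X x)\<^sup>2 + (X x)\<^sup>2)"
    by (rule real_sqrt_ge_abs1)
  ultimately show ?thesis
    by (simp add: normalized_deriv_def abs_divide)
qed

lemma normalized_deriv_at_zero: "X x = 0 \<Longrightarrow> normalized_deriv X x = sgn (deriv X x)"
  by (simp add: normalized_deriv_def sgn_real_def)

lemma sum_squares_deriv_pos: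
  fixes X :: "real \<Rightarrow> real"
  shows "\<forall>x. X x = 0 \<longrightarrow> deriv X x \<noteq> 0 \<Longrightarrow> 0 < (deriv X x)\<^sup>2 + (X x)\<^sup>2"
  by (metis sum_power2_gt_zero_iff)

lemma smooth_real_normalized_deriv:
  assumes "smooth_real X" "\<forall>x. X x = 0 \<longrightarrow> deriv X x \<noteq> 0"
  shows "smooth_real (normalized_deriv X)"
  unfolding normalized_deriv_def[abs_def]
  using assms sum_squares_deriv_pos[OF assms(2)]
  by (intro smooth_real_divide smooth_real_sqrt smooth_real_deriv smooth_real_add smooth_real_power)
    auto

lemma has_real_derivative_normalized:
  fixes u v :: "real \<Rightarrow> real" and x :: real
  defines "N \<equiv> (u x)\<^sup>2 + (v x)\<^sup>2"
  assumes u: "(u has_real_derivative u') (at x)" and v: "(v has_real_derivative v') (at x)"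
    and "0 < N"
  shows "((\<lambda>x. u x / sqrt ((u x)\<^sup>2 + (v x)\<^sup>2)) has_real_derivative
      v x * (v x * u' - u x * v') / (N * sqrt N)) (at x)"
proof -
  have "((\<lambda>x. u x / sqrt ((u x)\<^sup>2 + (v x)\<^sup>2)) has_real_derivative
      (u' * sqrt N - u x * (inverse (sqrt N) / 2 * (2 * u x * u' + 2 * v x * v'))) / (sqrt N)\<^sup>2) (at x)"
    using u v \<open>0 < N\<close> unfolding N_def by (auto intro!: derivative_eq_intros)
  moreover have s: "0 < sqrt N" "(sqrt N)\<^sup>2 = (u x)\<^sup>2 + (v x)\<^sup>2"
    using \<open>0 < N\<close> by (simp_all add: N_def)
  from s(1) have "(u' * sqrt N - u x * (inverse (sqrt N) / 2 * (2 * u x * u' + 2 * v x * v'))) / (sqrt N)\<^sup>2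
      = (u' * (sqrt N)\<^sup>2 - u x * (u x * u' + v x * v')) / ((sqrt N)\<^sup>2 * sqrt N)"
    by (simp add: field_simps power2_eq_square)
  also have "\<dots> = v x * (v x * u' - u x * v') / (N * sqrt N)"
    unfolding s(2) by (simp add: N_def algebra_simps power2_eq_square)
  ultimately show ?thesis
    by simp
qed

lemma has_real_derivative_normalized_deriv:
  fixes X :: "real \<Rightarrow> real" and x :: real
  defines "N \<equiv> (deriv X x)\<^sup>2 + (X x)\<^sup>2"
  assumes "smooth_real X" "0 < N"
  shows "(normalized_deriv X has_real_derivative
      X x * (X x * deriv (deriv X) x - (deriv X x)\<^sup>2) / (N * sqrt N)) (at x)"
  using has_real_derivative_normalized[of "deriv X" _ x X] assms
    smooth_real_has_deriv smooth_real_deriv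
  by (simp add: normalized_deriv_def[abs_def] power2_eq_square)

section \<open>The cutoff function\<close>

definition cutoff :: "(real \<Rightarrow> real) \<Rightarrow> real \<Rightarrow> real \<Rightarrow> real \<Rightarrow> real" where
  "cutoff X D p x = (1 - normalized_deriv X x * damping D p (X x)) / 2"

lemma cutoff_at_zero: "X x = 0 \<Longrightarrow> cutoff X D p x = (1 - sgn (deriv X x)) / 2"
  by (simp add: cutoff_def damping_def normalized_deriv_at_zero)

lemma smooth_real_cutoff:
  assumes "smooth_real X" "\<forall>x. X x = 0 \<longrightarrow> deriv X x \<noteq> 0" "D \<ge> 0"
  shows "smooth_real (cutoff X D p)"
proof -
  have "smooth_real (\<lambda>x. damping D p (X x))"
    using assms by (blast intro: smooth_real_compose[OF smooth_real_damping])
  then show ?thesis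
    unfolding cutoff_def[abs_def] using assms smooth_real_normalized_deriv
    by (intro smooth_real_divide smooth_real_mult smooth_real_diff smooth_real_const) auto
qed

lemma periodic_2pi_cutoff: "periodic_2pi X \<Longrightarrow> periodic_2pi (cutoff X D p)"
  using periodic_2pi_deriv[of X]
  by (simp add: periodic_2pi_def cutoff_def normalized_deriv_def)

lemma abs_mult_deriv_cutoff_le:
  fixes X :: "real \<Rightarrow> real" and x :: real
  defines "N \<equiv> (deriv X x)\<^sup>2 + (X x)\<^sup>2"
  assumes X: "smooth_real X" and "0 < N" and "D \<ge> 0" "p \<ge> 0"
  shows "\<bar>X x * deriv (cutoff X D p) x\<bar> \<le>
    ((X x)\<^sup>2 * \<bar>X x * deriv (deriv X) x - (deriv X x)\<^sup>2\<bar> / (N * sqrt N) * damping D p (X x)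
      + 2 * p * \<bar>deriv X x\<bar>) / 2"
proof -
  define dN where "dN = X x * (X x * deriv (deriv X) x - (deriv X x)\<^sup>2) / (N * sqrt N)"
  define dM where "dM = deriv (damping D p) (X x)"
  have "((\<lambda>x. damping D p (X x)) has_real_derivative dM * deriv X x) (at x)"
    unfolding dM_def using smooth_real_has_deriv smooth_real_damping \<open>D \<ge> 0\<close> X
    by (blast intro: DERIV_chain2)
  then have "(cutoff X D p has_real_derivative
      - (dN * damping D p (X x) + normalized_deriv X x * (dM * deriv X x)) / 2) (at x)"
    unfolding cutoff_def[abs_def] dN_def N_def
    using has_real_derivative_normalized_deriv[OF X] \<open>0 < N\<close>[unfolded N_def]
    by (auto intro!: derivative_eq_intros)
  then have deriv_eq: "X x * deriv (cutoff X D p) x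
      = - (X x * dN * damping D p (X x) + normalized_deriv X x * deriv X x * (X x * dM)) / 2"
    by (simp add: DERIV_imp_deriv algebra_simps)
  have "\<bar>X x * deriv (cutoff X D p) x\<bar>
      \<le> (\<bar>X x * dN\<bar> * damping D p (X x) + \<bar>normalized_deriv X x * deriv X x * (X x * dM)\<bar>) / 2"
  proof -
    have "\<bar>- (u * M + v) / 2\<bar> \<le> (\<bar>u\<bar> * M + \<bar>v\<bar>) / 2" if "0 < M" for u v M :: real
      using that abs_triangle_ineq[of "u * M" v] by (simp add: abs_mult)
    then show ?thesis
      unfolding deriv_eq using damping_pos[OF \<open>D \<ge> 0\<close>] by blast
  qed
  also have "\<bar>X x * dN\<bar> = (X x)\<^sup>2 * \<bar>X x * deriv (deriv X) x - (deriv X x)\<^sup>2\<bar> / (N * sqrt N)"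
    using \<open>0 < N\<close> by (simp add: dN_def abs_mult abs_divide power2_eq_square)
  also have "\<bar>normalized_deriv X x * deriv X x * (X x * dM)\<bar>
      = \<bar>normalized_deriv X x\<bar> * \<bar>deriv X x\<bar> * \<bar>X x * dM\<bar>"
    by (simp add: abs_mult)
  also have "\<dots> \<le> 1 * \<bar>deriv X x\<bar> * (2 * p)"
    unfolding dM_def using abs_normalized_deriv_le_1 abs_mult_deriv_damping_le assms
    by (intro mult_mono) auto
  finally show ?thesis
    by (simp add: algebra_simps)
qed

lemma nondegenerate_periodic_bounds:
  assumes X: "smooth_real X" and "periodic_2pi X" and nondeg: "\<forall>x. X x = 0 \<longrightarrow> deriv X x \<noteq> 0"
  obtains m A B C where "m > 0" "\<And>x. m \<le> (deriv X x)\<^sup>2 + (X x)\<^sup>2"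
    "\<And>x. \<bar>deriv X x\<bar> \<le> A" "\<And>x. \<bar>X x\<bar> \<le> B"
    "\<And>x. \<bar>X x * deriv (deriv X) x - (deriv X x)\<^sup>2\<bar> \<le> C"
proof -
  define N where "N x = (deriv X x)\<^sup>2 + (X x)\<^sup>2" for x
  define G where "G x = X x * deriv (deriv X) x - (deriv X x)\<^sup>2" for x
  have X': "smooth_real (deriv X)" "periodic_2pi (deriv X)"
    and X'': "smooth_real (deriv (deriv X))" "periodic_2pi (deriv (deriv X))"
    using assms by (simp_all add: smooth_real_deriv periodic_2pi_deriv)
  have "continuous_on {0..2 * pi} N" "continuous_on {0..2 * pi} G"
    unfolding N_def[abs_def] G_def[abs_def] using X X' X''
    by (intro smooth_real_continuous_on smooth_real_add smooth_real_diff smooth_real_mult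
        smooth_real_power; simp)+
  moreover have "periodic_2pi N" "periodic_2pi G"
    using \<open>periodic_2pi X\<close> X' X'' by (simp_all add: periodic_2pi_def N_def G_def)
  ultimately obtain m C where "m > 0" "\<And>x. m \<le> N x" "\<And>x. \<bar>G x\<bar> \<le> C"
    using periodic_2pi_pos_bounded_below[of N] periodic_2pi_bounded[of G]
      sum_squares_deriv_pos[OF nondeg] unfolding N_def by metis
  moreover obtain A where "\<And>x. \<bar>deriv X x\<bar> \<le> A"
    using periodic_2pi_bounded[OF X'(2) smooth_real_continuous_on[OF X'(1)]] by blast
  moreover obtain B where "\<And>x. \<bar>X x\<bar> \<le> B"
    using periodic_2pi_bounded[OF \<open>periodic_2pi X\<close> smooth_real_continuous_on[OF X]] by blast
  ultimately show ?thesis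
    using that unfolding N_def G_def by blast
qed

lemma abs_mult_deriv_cutoff_small:
  assumes X: "smooth_real X" and "periodic_2pi X" and nondeg: "\<forall>x. X x = 0 \<longrightarrow> deriv X x \<noteq> 0"
    and "\<sigma> > 0"
  obtains D p where "D \<ge> 0" "p \<ge> 0" "\<And>x. \<bar>X x * deriv (cutoff X D p) x\<bar> < \<sigma>"
proof -
  define N where "N x = (deriv X x)\<^sup>2 + (X x)\<^sup>2" for x
  define G where "G x = X x * deriv (deriv X) x - (deriv X x)\<^sup>2" for x
  obtain m A B C where "m > 0" and m: "\<And>x. m \<le> N x" and A: "\<And>x. \<bar>deriv X x\<bar> \<le> A"
    and B: "\<And>x. \<bar>X x\<bar> \<le> B" and C: "\<And>x. \<bar>G x\<bar> \<le> C"
    using nondegenerate_periodic_bounds[OF assms(1-3)] unfolding N_def G_def by metis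
  have "A \<ge> 0" "C \<ge> 0"
    using A[of 0] C[of 0] by linarith+
  define K where "K = C / (m * sqrt m)"
  define p where "p = \<sigma> / (4 * (A + 1))"
  have "K \<ge> 0" "p > 0"
    using \<open>m > 0\<close> \<open>C \<ge> 0\<close> \<open>A \<ge> 0\<close> \<open>\<sigma> > 0\<close> by (simp_all add: K_def p_def)
  obtain D where "D > 0" and D: "\<And>b. \<bar>b\<bar> \<le> B \<Longrightarrow> b\<^sup>2 * damping D p b \<le> \<sigma> / (K + 1)"
    using square_mult_damping_small[OF \<open>p > 0\<close>, of "\<sigma> / (K + 1)"] \<open>\<sigma> > 0\<close> \<open>K \<ge> 0\<close> by auto
  have small: "\<bar>X x * deriv (cutoff X D p) x\<bar> < \<sigma>" for x
  proof -
    have "0 < N x"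
      using \<open>m > 0\<close> m[of x] by linarith
    have "\<bar>G x\<bar> / (N x * sqrt (N x)) \<le> K"
      unfolding K_def using \<open>m > 0\<close> m[of x] C[of x]
      by (intro frac_le mult_mono real_sqrt_le_mono) auto
    then have "\<bar>G x\<bar> / (N x * sqrt (N x)) * ((X x)\<^sup>2 * damping D p (X x))
        \<le> K * ((X x)\<^sup>2 * damping D p (X x))"
      using damping_pos[of D p "X x"] \<open>D > 0\<close> by (intro mult_right_mono) auto
    then have "(X x)\<^sup>2 * \<bar>G x\<bar> / (N x * sqrt (N x)) * damping D p (X x)
        \<le> K * ((X x)\<^sup>2 * damping D p (X x))"
      by (simp add: ac_simps)
    also have "\<dots> \<le> K * (\<sigma> / (K + 1))"
      using D[OF B] \<open>K \<ge> 0\<close> by (rule mult_left_mono)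
    also have "\<dots> < \<sigma>"
      using \<open>K \<ge> 0\<close> \<open>\<sigma> > 0\<close> by (simp add: field_simps)
    finally have "(X x)\<^sup>2 * \<bar>G x\<bar> / (N x * sqrt (N x)) * damping D p (X x) < \<sigma>" .
    moreover have "2 * p * \<bar>deriv X x\<bar> < \<sigma>"
    proof -
      have "2 * p * \<bar>deriv X x\<bar> \<le> 2 * p * (A + 1)"
        using A[of x] \<open>p > 0\<close> by simp
      also have "\<dots> = \<sigma> / 2"
        using \<open>A \<ge> 0\<close> by (simp add: p_def field_simps)
      also have "\<dots> < \<sigma>"
        using \<open>\<sigma> > 0\<close> by simp
      finally show ?thesis .
    qed
    moreover have "\<bar>X x * deriv (cutoff X D p) x\<bar> \<le>
        ((X x)\<^sup>2 * \<bar>G x\<bar> / (N x * sqrt (N x)) * damping D p (X x) + 2 * p * \<bar>deriv X x\<bar>) / 2"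
      unfolding N_def G_def using \<open>0 < N x\<close> \<open>D > 0\<close> \<open>p > 0\<close>
      by (intro abs_mult_deriv_cutoff_le X) (simp_all add: N_def)
    moreover have "c < \<sigma>" if "a < \<sigma>" "b < \<sigma>" "c \<le> (a + b) / 2" for a b c :: real
      using that by argo
    ultimately show ?thesis
      by blast
  qed
  show ?thesis
    by (rule that[OF less_imp_le[OF \<open>D > 0\<close>] less_imp_le[OF \<open>p > 0\<close>] small])
qed

theorem mainTheorem15:
  fixes X :: "real \<Rightarrow> real"
  assumes "smooth_real X" and "periodic_2pi X"
    and "\<exists>x. X x = 0"
    and "\<forall>x. X x = 0 \<longrightarrow> deriv X x \<noteq> 0"
  shows "\<exists>\<sigma>0>0. \<forall>\<sigma>. 0 < \<sigma> \<and> \<sigma> < \<sigma>0 \<longrightarrow>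
    (\<exists>\<eta> :: real \<Rightarrow> real. smooth_real \<eta> \<and> periodic_2pi \<eta> \<and>
       (\<forall>x\<in>Kplus X. \<eta> x = 1) \<and> (\<forall>x\<in>Kminus X. \<eta> x = 0) \<and>
       (\<forall>x. \<bar>X x * deriv \<eta> x\<bar> < \<sigma>) \<and>
       (\<forall>x \<gamma>. \<gamma> 0 = x \<and> (\<forall>t. (\<gamma> has_real_derivative X (\<gamma> t)) (at t)) \<longrightarrow>
          ((\<eta> \<circ> \<gamma>) has_real_derivative X x * deriv \<eta> x) (at 0)))"
proof (intro exI[of _ 1] conjI allI impI zero_less_one)
  fix \<sigma> :: real
  assume "0 < \<sigma> \<and> \<sigma> < 1"
  then have "0 < \<sigma>"
    by simp
  then obtain D p where "D \<ge> 0" and small: "\<And>x. \<bar>X x * deriv (cutoff X D p) x\<bar> < \<sigma>"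
    using abs_mult_deriv_cutoff_small[OF assms(1,2,4), of \<sigma>] by metis
  have smooth: "smooth_real (cutoff X D p)"
    using smooth_real_cutoff[OF assms(1,4) \<open>D \<ge> 0\<close>] .
  show "\<exists>\<eta>. smooth_real \<eta> \<and> periodic_2pi \<eta> \<and>
       (\<forall>x\<in>Kplus X. \<eta> x = 1) \<and> (\<forall>x\<in>Kminus X. \<eta> x = 0) \<and>
       (\<forall>x. \<bar>X x * deriv \<eta> x\<bar> < \<sigma>) \<and>
       (\<forall>x \<gamma>. \<gamma> 0 = x \<and> (\<forall>t. (\<gamma> has_real_derivative X (\<gamma> t)) (at t)) \<longrightarrow>
          ((\<eta> \<circ> \<gamma>) has_real_derivative X x * deriv \<eta> x) (at 0))"
  proof (intro exI[of _ "cutoff X D p"] conjI ballI allI impI)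
    show "periodic_2pi (cutoff X D p)"
      using assms(2) by (rule periodic_2pi_cutoff)
    show "cutoff X D p x = 1" if "x \<in> Kplus X" for x
      using that by (simp add: Kplus_def cutoff_at_zero)
    show "cutoff X D p x = 0" if "x \<in> Kminus X" for x
      using that by (simp add: Kminus_def cutoff_at_zero)
    show "((cutoff X D p \<circ> \<gamma>) has_real_derivative X x * deriv (cutoff X D p) x) (at 0)"
      if "\<gamma> 0 = x \<and> (\<forall>t. (\<gamma> has_real_derivative X (\<gamma> t)) (at t))" for x \<gamma>
      using that DERIV_chain[OF smooth_real_has_deriv[OF smooth]] by (metis mult.commute)
  qed (use smooth small in auto)
qed
end
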